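(* Let $B_1,\dots,B_k$ be finite blocks (nonseparable graphs, i.e. connected graphs with no cut vertex), each of which admits an $\alpha$-labeling. Then the disjoint union $B_1\cup B_2\cup\dots\cup B_k$ is odd-graceful.
   Context: For a graph $G$ with $n$ edges, a graceful labeling is an injection $f:V(G)\to\{0,1,\dots,n\}$ such that the edge weights $|f(x)-f(y)|$, $xy\in E(G)$, are exactly $\{1,2,\dots,n\}$. An $\alpha$-labeling is a graceful labeling $f$ for which there is an integer $\lambda$ such that for every edge $xy$ either $f(x)\le\lambda<f(y)$ or $f(y)\le\lambda<f(x)$. A graph $G$ with $n$ edges is odd-graceful if there is an injective map $f:V(G)\to\{0,1,\dots,2n-1\}$ such that the set of edge weights $\{|f(x)-f(y)| : xy\in E(G)\}$ equals $\{1,3,\dots,2n-1\}$. *)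

theory Defs
  imports Main
begin

definition simple_graph :: "'a set \<Rightarrow> 'a set set \<Rightarrow> bool" where
  "simple_graph V E \<longleftrightarrow> finite V \<and>
     (\<forall>e\<in>E. \<exists>x y. x \<noteq> y \<and> x \<in> V \<and> y \<in> V \<and> e = {x, y})"

definition adj :: "'a set set \<Rightarrow> 'a \<Rightarrow> 'a \<Rightarrow> bool" where
  "adj E x y \<longleftrightarrow> {x, y} \<in> E"

definition connected_graph :: "'a set \<Rightarrow> 'a set set \<Rightarrow> bool" where
  "connected_graph V E \<longleftrightarrow> V \<noteq> {} \<and> (\<forall>x\<in>V. \<forall>y\<in>V. (adj E)\<^sup>*\<^sup>* x y)"

definition del_vertex_E :: "'a set set \<Rightarrow> 'a \<Rightarrow> 'a set set" where
  "del_vertex_E E v = {e \<in> E. v \<notin> e}"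

definition cut_vertex :: "'a set \<Rightarrow> 'a set set \<Rightarrow> 'a \<Rightarrow> bool" where
  "cut_vertex V E v \<longleftrightarrow> v \<in> V \<and>
     (\<exists>x\<in>V - {v}. \<exists>y\<in>V - {v}. \<not> (adj (del_vertex_E E v))\<^sup>*\<^sup>* x y)"

definition nonseparable :: "'a set \<Rightarrow> 'a set set \<Rightarrow> bool" where
  "nonseparable V E \<longleftrightarrow> simple_graph V E \<and> connected_graph V E \<and> (\<forall>v. \<not> cut_vertex V E v)"

definition edge_weights :: "('a \<Rightarrow> nat) \<Rightarrow> 'a set set \<Rightarrow> nat set" where
  "edge_weights f E = {w. \<exists>x y. {x, y} \<in> E \<and> x \<noteq> y \<and> w = nat \<bar>int (f x) - int (f y)\<bar>}"

definition graceful_labeling :: "'a set \<Rightarrow> 'a set set \<Rightarrow> ('a \<Rightarrow> nat) \<Rightarrow> bool" where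
  "graceful_labeling V E f \<longleftrightarrow> inj_on f V \<and> f ` V \<subseteq> {0..card E} \<and>
     edge_weights f E = {1..card E}"

definition alpha_labeling :: "'a set \<Rightarrow> 'a set set \<Rightarrow> ('a \<Rightarrow> nat) \<Rightarrow> bool" where
  "alpha_labeling V E f \<longleftrightarrow> graceful_labeling V E f \<and>
     (\<exists>lam::int. \<forall>x y. {x, y} \<in> E \<and> x \<noteq> y \<longrightarrow>
        (int (f x) \<le> lam \<and> lam < int (f y)) \<or> (int (f y) \<le> lam \<and> lam < int (f x)))"

definition has_alpha_labeling :: "'a set \<Rightarrow> 'a set set \<Rightarrow> bool" where
  "has_alpha_labeling V E \<longleftrightarrow> (\<exists>f. alpha_labeling V E f)"

definition odd_graceful :: "'a set \<Rightarrow> 'a set set \<Rightarrow> bool" where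
  "odd_graceful V E \<longleftrightarrow> (\<exists>f::'a \<Rightarrow> nat. inj_on f V \<and> f ` V \<subseteq> {0..<2 * card E} \<and>
     edge_weights f E = {w. odd w \<and> w < 2 * card E})"

text \<open>Disjoint union of the graphs (V i, E i), i < k; vertex (i,x) is copy of x in block i.\<close>
definition disj_union_V :: "nat \<Rightarrow> (nat \<Rightarrow> 'a set) \<Rightarrow> (nat \<times> 'a) set" where
  "disj_union_V k V = (SIGMA i:{..<k}. V i)"

definition disj_union_E :: "nat \<Rightarrow> (nat \<Rightarrow> 'a set set) \<Rightarrow> (nat \<times> 'a) set set" where
  "disj_union_E k E = (\<Union>i<k. (\<lambda>e. Pair i ` e) ` E i)"

end

theory Submission
  imports Defs
begin

text \<open>Induction on the number of blocks. If \<open>G\<close> is odd-graceful with \<open>N\<close> edges and the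
  block \<open>B\<close> has an \<open>\<alpha>\<close>-labeling \<open>f\<close> with threshold \<open>\<lambda>\<close> and \<open>n\<close> edges, label the vertices
  of \<open>B\<close> below the threshold by \<open>2 f x\<close>, those above it by \<open>2 f x + 2N - 1\<close>, and shift the
  labels of \<open>G\<close> up by \<open>2\<lambda> + 1\<close>. The three ranges of labels are disjoint, the edges of \<open>G\<close>
  keep their weights \<open>1, 3, \<dots>, 2N - 1\<close>, and every edge of \<open>B\<close>, crossing the threshold,
  gets weight \<open>2d + 2N - 1\<close> where \<open>d\<close> runs over its graceful weights \<open>1, \<dots>, n\<close>.\<close>

lemma simple_graph_edge_subset: "simple_graph V E \<Longrightarrow> e \<in> E \<Longrightarrow> e \<subseteq> V"
  unfolding simple_graph_def by fastforce

lemma simple_graph_finite_edges: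
  assumes "simple_graph V E"
  shows "finite E"
proof -
  have "E \<subseteq> Pow V" using simple_graph_edge_subset[OF assms] by blast
  moreover have "finite V" using assms by (simp add: simple_graph_def)
  ultimately show ?thesis by (simp add: finite_subset)
qed

lemma simple_graph_Un:
  "simple_graph V1 E1 \<Longrightarrow> simple_graph V2 E2 \<Longrightarrow> simple_graph (V1 \<union> V2) (E1 \<union> E2)"
  unfolding simple_graph_def by (metis UnE UnI1 UnI2 finite_Un)

lemma image_edge_preimage:
  assumes "inj h" and "{x', y'} \<in> (`) h ` E"
  shows "x' = h (inv h x') \<and> y' = h (inv h y') \<and> {inv h x', inv h y'} \<in> E"
proof -
  obtain e where e: "e \<in> E" "h ` e = {x', y'}" using assms(2) by auto
  then have "x' \<in> range h" "y' \<in> range h" by auto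
  moreover have "e = inv h ` {x', y'}" using assms(1) e(2) by (metis image_inv_f_f)
  ultimately show ?thesis using e(1) by (simp add: f_inv_into_f)
qed

lemma simple_graph_image:
  assumes "inj h" and "simple_graph V E"
  shows "simple_graph (h ` V) ((`) h ` E)"
  unfolding simple_graph_def
proof (intro conjI ballI)
  show "finite (h ` V)" using assms(2) by (simp add: simple_graph_def)
  fix e' assume "e' \<in> (`) h ` E"
  then obtain e where "e \<in> E" "e' = h ` e" by blast
  moreover obtain x y where "x \<noteq> y" "x \<in> V" "y \<in> V" "e = {x, y}"
    using assms(2) \<open>e \<in> E\<close> unfolding simple_graph_def by blast
  ultimately show "\<exists>x y. x \<noteq> y \<and> x \<in> h ` V \<and> y \<in> h ` V \<and> e' = {x, y}"
    using assms(1) by (intro exI[of _ "h x"] exI[of _ "h y"]) (simp add: inj_eq)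
qed

lemma edge_weights_image:
  assumes "inj h"
  shows "edge_weights (f \<circ> inv h) ((`) h ` E) = edge_weights f E"
proof
  show "edge_weights (f \<circ> inv h) ((`) h ` E) \<subseteq> edge_weights f E"
  proof
    fix w assume "w \<in> edge_weights (f \<circ> inv h) ((`) h ` E)"
    then obtain x' y' where xy: "{x', y'} \<in> (`) h ` E" "x' \<noteq> y'"
        "w = nat \<bar>int (f (inv h x')) - int (f (inv h y'))\<bar>"
      unfolding edge_weights_def by auto
    with image_edge_preimage[OF assms xy(1)]
    have "inv h x' \<noteq> inv h y'" "{inv h x', inv h y'} \<in> E" by metis+
    with xy(3) show "w \<in> edge_weights f E" unfolding edge_weights_def by blast
  qed
next
  show "edge_weights f E \<subseteq> edge_weights (f \<circ> inv h) ((`) h ` E)"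
  proof
    fix w assume "w \<in> edge_weights f E"
    then obtain x y where xy: "{x, y} \<in> E" "x \<noteq> y" "w = nat \<bar>int (f x) - int (f y)\<bar>"
      unfolding edge_weights_def by blast
    have "{h x, h y} \<in> (`) h ` E" using xy(1) by (metis image_empty image_insert image_eqI)
    moreover have "h x \<noteq> h y" using assms xy(2) by (simp add: inj_eq)
    ultimately show "w \<in> edge_weights (f \<circ> inv h) ((`) h ` E)"
      unfolding edge_weights_def using xy(3) assms
      by (intro CollectI exI[of _ "h x"] exI[of _ "h y"]) (simp add: inv_f_f)
  qed
qed

lemma alpha_labeling_image:
  assumes "inj h" and "alpha_labeling V E f"
  shows "alpha_labeling (h ` V) ((`) h ` E) (f \<circ> inv h)"
proof -
  have card: "card ((`) h ` E) = card E"
    using assms(1) by (intro card_image inj_onI) (simp add: inj_image_eq_iff)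
  obtain lam :: int where lam: "\<forall>x y. {x, y} \<in> E \<and> x \<noteq> y \<longrightarrow>
      (int (f x) \<le> lam \<and> lam < int (f y)) \<or> (int (f y) \<le> lam \<and> lam < int (f x))"
    using assms(2) unfolding alpha_labeling_def by blast
  have "\<forall>x y. {x, y} \<in> (`) h ` E \<and> x \<noteq> y \<longrightarrow>
      (int ((f \<circ> inv h) x) \<le> lam \<and> lam < int ((f \<circ> inv h) y)) \<or>
      (int ((f \<circ> inv h) y) \<le> lam \<and> lam < int ((f \<circ> inv h) x))"
    using lam image_edge_preimage[OF assms(1)] by (metis comp_apply)
  moreover have "graceful_labeling (h ` V) ((`) h ` E) (f \<circ> inv h)"
    using assms
    by (auto simp: alpha_labeling_def graceful_labeling_def card edge_weights_image
        image_comp[symmetric] image_inv_f_f inj_on_def)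
  ultimately show ?thesis unfolding alpha_labeling_def by blast
qed

lemma alpha_labeling_threshold:
  assumes "alpha_labeling V E f" and "simple_graph V E" and "E \<noteq> {}"
  obtains lam :: nat where "lam < card E"
    and "\<And>x y. {x, y} \<in> E \<Longrightarrow> x \<noteq> y \<Longrightarrow> f x \<le> lam \<and> lam < f y \<or> f y \<le> lam \<and> lam < f x"
proof -
  obtain L :: int where L: "\<And>x y. {x, y} \<in> E \<Longrightarrow> x \<noteq> y \<Longrightarrow>
      (int (f x) \<le> L \<and> L < int (f y)) \<or> (int (f y) \<le> L \<and> L < int (f x))"
    using assms(1) unfolding alpha_labeling_def by blast
  obtain e where "e \<in> E" using assms(3) by blast
  then obtain x y where xy: "x \<noteq> y" "x \<in> V" "y \<in> V" "{x, y} \<in> E"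
    using assms(2) unfolding simple_graph_def by metis
  have "f x \<le> card E" "f y \<le> card E"
    using assms(1) xy(2,3) by (auto simp: alpha_labeling_def graceful_labeling_def)
  with L[OF xy(4,1)] have L_bounds: "0 \<le> L" "L < int (card E)" by linarith+
  show thesis
  proof (rule that[of "nat L"])
    show "nat L < card E" using L_bounds by linarith
    have "f z \<le> nat L \<longleftrightarrow> int (f z) \<le> L" "nat L < f z \<longleftrightarrow> L < int (f z)" for z
      using L_bounds by linarith+
    then show "f x \<le> nat L \<and> nat L < f y \<or> f y \<le> nat L \<and> nat L < f x"
      if "{x, y} \<in> E" "x \<noteq> y" for x y
      using L[OF that] by presburger
  qed
qed

lemma edge_weights_Un: "edge_weights f (E1 \<union> E2) = edge_weights f E1 \<union> edge_weights f E2"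
  unfolding edge_weights_def by blast

lemma edge_weights_shift:
  assumes "\<And>x. x \<in> \<Union>E \<Longrightarrow> l x = g x + c"
  shows "edge_weights l E = edge_weights g E"
proof -
  have "nat \<bar>int (l x) - int (l y)\<bar> = nat \<bar>int (g x) - int (g y)\<bar>" if "{x, y} \<in> E" for x y
  proof -
    have "x \<in> \<Union>E" "y \<in> \<Union>E" using that by auto
    then show ?thesis using assms by simp
  qed
  then show ?thesis unfolding edge_weights_def by (intro Collect_cong) (metis (no_types))
qed

lemma edge_weights_threshold_relabel:
  fixes f l :: "'a \<Rightarrow> nat"
  assumes cross: "\<And>x y. {x, y} \<in> E \<Longrightarrow> x \<noteq> y \<Longrightarrow> f x \<le> lam \<and> lam < f y \<or> f y \<le> lam \<and> lam < f x"
    and l: "\<And>x. x \<in> \<Union>E \<Longrightarrow> l x = (if f x \<le> lam then 2 * f x else 2 * f x + 2 * N - 1)"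
  shows "edge_weights l E = (\<lambda>d. 2 * d + 2 * N - 1) ` edge_weights f E"
proof -
  have weight: "nat \<bar>int (l x) - int (l y)\<bar> = 2 * nat \<bar>int (f x) - int (f y)\<bar> + 2 * N - 1"
    if "{x, y} \<in> E" "x \<noteq> y" for x y
  proof -
    have "x \<in> \<Union>E" "y \<in> \<Union>E" using that(1) by auto
    then show ?thesis using cross[OF that] l[of x] l[of y] by auto
  qed
  show ?thesis
  proof (intro equalityI subsetI)
    fix w assume "w \<in> edge_weights l E"
    then obtain x y where "{x, y} \<in> E" "x \<noteq> y" "w = nat \<bar>int (l x) - int (l y)\<bar>"
      unfolding edge_weights_def by blast
    then show "w \<in> (\<lambda>d. 2 * d + 2 * N - 1) ` edge_weights f E"
      using weight unfolding edge_weights_def by blast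
  next
    fix w assume "w \<in> (\<lambda>d. 2 * d + 2 * N - 1) ` edge_weights f E"
    then obtain x y where xy: "{x, y} \<in> E" "x \<noteq> y"
        "w = 2 * nat \<bar>int (f x) - int (f y)\<bar> + 2 * N - 1"
      unfolding edge_weights_def by blast
    then show "w \<in> edge_weights l E"
      using weight[OF xy(1,2)] unfolding edge_weights_def by (intro CollectI exI[of _ x] exI[of _ y]) simp
  qed
qed

lemma odd_below_Un_shifted:
  "{w :: nat. odd w \<and> w < 2 * N} \<union> (\<lambda>d. 2 * d + 2 * N - 1) ` {1..n} =
   {w. odd w \<and> w < 2 * (N + n)}"
proof (intro equalityI subsetI)
  fix w assume "w \<in> {w. odd w \<and> w < 2 * N} \<union> (\<lambda>d. 2 * d + 2 * N - 1) ` {1..n}"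
  then show "w \<in> {w. odd w \<and> w < 2 * (N + n)}" by auto
next
  fix w assume w: "w \<in> {w. odd w \<and> w < 2 * (N + n)}"
  then obtain m where m: "w = 2 * m + 1" by (auto elim: oddE)
  show "w \<in> {w. odd w \<and> w < 2 * N} \<union> (\<lambda>d. 2 * d + 2 * N - 1) ` {1..n}"
  proof (cases "w < 2 * N")
    case False
    then have "w = 2 * (m + 1 - N) + 2 * N - 1" "m + 1 - N \<in> {1..n}" using m w by auto
    then show ?thesis by blast
  qed (use w in auto)
qed

definition join_labeling ::
    "'a set \<Rightarrow> ('a \<Rightarrow> nat) \<Rightarrow> nat \<Rightarrow> ('a \<Rightarrow> nat) \<Rightarrow> nat \<Rightarrow> 'a \<Rightarrow> nat" where
  "join_labeling V1 g N f lam x = (if x \<in> V1 then g x + (2 * lam + 1)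
     else if f x \<le> lam then 2 * f x else 2 * f x + 2 * N - 1)"

lemma join_labeling_bands:
  assumes g: "g ` V1 \<subseteq> {0..<2 * N}" and f: "f ` V2 \<subseteq> {0..n}" and disjoint: "V1 \<inter> V2 = {}"
  shows "x \<in> V2 \<Longrightarrow> f x \<le> lam \<Longrightarrow> join_labeling V1 g N f lam x \<le> 2 * lam"
    and "x \<in> V1 \<Longrightarrow> 2 * lam < join_labeling V1 g N f lam x \<and>
      join_labeling V1 g N f lam x \<le> 2 * N + 2 * lam"
    and "x \<in> V2 \<Longrightarrow> lam < f x \<Longrightarrow> 2 * N + 2 * lam < join_labeling V1 g N f lam x \<and>
      join_labeling V1 g N f lam x < 2 * (N + n)"
proof -
  show "x \<in> V2 \<Longrightarrow> f x \<le> lam \<Longrightarrow> join_labeling V1 g N f lam x \<le> 2 * lam"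
    using disjoint by (auto simp: join_labeling_def)
  show "x \<in> V1 \<Longrightarrow> 2 * lam < join_labeling V1 g N f lam x \<and>
      join_labeling V1 g N f lam x \<le> 2 * N + 2 * lam"
    using g by (fastforce simp: join_labeling_def)
  assume x: "x \<in> V2" "lam < f x"
  then have "x \<notin> V1" "f x \<le> n" using disjoint f by auto
  with x(2) show "2 * N + 2 * lam < join_labeling V1 g N f lam x \<and>
      join_labeling V1 g N f lam x < 2 * (N + n)"
    by (simp add: join_labeling_def) arith
qed

lemma join_labeling_inj_on:
  assumes g: "inj_on g V1" "g ` V1 \<subseteq> {0..<2 * N}" and f: "inj_on f V2" "f ` V2 \<subseteq> {0..n}"
    and disjoint: "V1 \<inter> V2 = {}"
  shows "inj_on (join_labeling V1 g N f lam) (V1 \<union> V2)"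
proof -
  note bands = join_labeling_bands[OF g(2) f(2) disjoint, of _ lam]
  define l where "l = join_labeling V1 g N f lam"
  have "inj_on l V1"
    using g(1) by (intro inj_onI) (simp add: l_def join_labeling_def inj_on_eq_iff)
  moreover have "inj_on l V2"
  proof (intro inj_onI)
    fix x y assume xy: "x \<in> V2" "y \<in> V2" and eq: "l x = l y"
    then have "x \<notin> V1" "y \<notin> V1" using disjoint by blast+
    moreover have "f x \<le> lam \<longleftrightarrow> f y \<le> lam"
      using bands(1)[of x] bands(1)[of y] bands(3)[of x] bands(3)[of y] xy eq
      unfolding l_def by linarith
    ultimately have "f x = f y" using eq unfolding l_def join_labeling_def by (auto split: if_splits)
    then show "x = y" using xy f(1) by (simp add: inj_on_eq_iff)
  qed
  moreover have "l ` V1 \<inter> l ` V2 = {}"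
    using bands unfolding l_def by (fastforce simp: not_le)
  ultimately show ?thesis unfolding l_def by (simp add: inj_on_Un) blast
qed

lemma join_labeling_range:
  assumes "g ` V1 \<subseteq> {0..<2 * N}" "f ` V2 \<subseteq> {0..n}" "V1 \<inter> V2 = {}" and "lam < n"
  shows "join_labeling V1 g N f lam ` (V1 \<union> V2) \<subseteq> {0..<2 * (N + n)}"
proof (intro image_subsetI)
  fix x assume "x \<in> V1 \<union> V2"
  then show "join_labeling V1 g N f lam x \<in> {0..<2 * (N + n)}"
    using join_labeling_bands[OF assms(1-3), of x lam] \<open>lam < n\<close>
    by (cases "f x \<le> lam") auto
qed

lemma simple_graph_edges_disjoint:
  assumes "simple_graph V1 E1" "simple_graph V2 E2" "V1 \<inter> V2 = {}"
  shows "E1 \<inter> E2 = {}"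
proof (rule ccontr)
  assume "E1 \<inter> E2 \<noteq> {}"
  then obtain e where e: "e \<in> E1" "e \<in> E2" by blast
  then obtain x y where "e = {x, y}" using assms(1) unfolding simple_graph_def by metis
  then have "x \<in> V1 \<inter> V2"
    using e simple_graph_edge_subset[OF assms(1)] simple_graph_edge_subset[OF assms(2)] by blast
  with assms(3) show False by blast
qed

lemma odd_graceful_Un_alpha_labeling:
  assumes G1: "simple_graph V1 E1" "odd_graceful V1 E1"
    and G2: "simple_graph V2 E2" "alpha_labeling V2 E2 f" "E2 \<noteq> {}"
    and disjoint: "V1 \<inter> V2 = {}"
  shows "odd_graceful (V1 \<union> V2) (E1 \<union> E2)"
proof -
  define N where "N = card E1"
  define n where "n = card E2"
  obtain g where g: "inj_on g V1" "g ` V1 \<subseteq> {0..<2 * N}"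
    and g_weights: "edge_weights g E1 = {w. odd w \<and> w < 2 * N}"
    using G1(2) unfolding odd_graceful_def N_def by blast
  obtain lam where lam: "lam < n" and cross: "\<And>x y. {x, y} \<in> E2 \<Longrightarrow> x \<noteq> y \<Longrightarrow>
      f x \<le> lam \<and> lam < f y \<or> f y \<le> lam \<and> lam < f x"
    using alpha_labeling_threshold[OF G2(2,1,3)] unfolding n_def by blast
  have f: "inj_on f V2" "f ` V2 \<subseteq> {0..n}" and f_weights: "edge_weights f E2 = {1..n}"
    using G2(2) unfolding alpha_labeling_def graceful_labeling_def n_def by auto
  define l where "l = join_labeling V1 g N f lam"
  have card: "card (E1 \<union> E2) = N + n"
    using simple_graph_edges_disjoint[OF G1(1) G2(1) disjoint]
      simple_graph_finite_edges[OF G1(1)] simple_graph_finite_edges[OF G2(1)]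
    by (simp add: N_def n_def card_Un_disjoint)
  have "edge_weights l E1 = edge_weights g E1"
    by (rule edge_weights_shift[of _ _ _ "2 * lam + 1"])
      (use simple_graph_edge_subset[OF G1(1)] in \<open>auto simp: l_def join_labeling_def\<close>)
  moreover have "edge_weights l E2 = (\<lambda>d. 2 * d + 2 * N - 1) ` edge_weights f E2"
    by (rule edge_weights_threshold_relabel[OF cross])
      (use simple_graph_edge_subset[OF G2(1)] disjoint in \<open>auto simp: l_def join_labeling_def\<close>)
  ultimately have "edge_weights l (E1 \<union> E2) =
      {w. odd w \<and> w < 2 * N} \<union> (\<lambda>d. 2 * d + 2 * N - 1) ` {1..n}"
    by (simp only: edge_weights_Un g_weights f_weights)
  then have "edge_weights l (E1 \<union> E2) = {w. odd w \<and> w < 2 * (N + n)}"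
    by (simp only: odd_below_Un_shifted)
  moreover have "inj_on l (V1 \<union> V2)" "l ` (V1 \<union> V2) \<subseteq> {0..<2 * (N + n)}"
    unfolding l_def using join_labeling_inj_on[OF g f disjoint]
      join_labeling_range[OF g(2) f(2) disjoint lam] by simp_all
  ultimately show ?thesis unfolding odd_graceful_def card by blast
qed

lemma disj_union_V_Suc: "disj_union_V (Suc k) V = disj_union_V k V \<union> Pair k ` V k"
  unfolding disj_union_V_def by (auto simp: lessThan_Suc)

lemma disj_union_E_Suc: "disj_union_E (Suc k) E = disj_union_E k E \<union> (`) (Pair k) ` E k"
  unfolding disj_union_E_def by (simp add: lessThan_Suc Un_commute)

lemma odd_graceful_disj_union:
  assumes "\<And>i. i < k \<Longrightarrow> simple_graph (V i) (E i)"
    and "\<And>i. i < k \<Longrightarrow> E i \<noteq> {}"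
    and "\<And>i. i < k \<Longrightarrow> has_alpha_labeling (V i) (E i)"
  shows "simple_graph (disj_union_V k V) (disj_union_E k E) \<and>
    odd_graceful (disj_union_V k V) (disj_union_E k E)"
  using assms
proof (induction k)
  case 0
  show ?case
    by (simp add: disj_union_V_def disj_union_E_def simple_graph_def odd_graceful_def
        edge_weights_def)
next
  case (Suc k)
  have IH: "simple_graph (disj_union_V k V) (disj_union_E k E)"
      "odd_graceful (disj_union_V k V) (disj_union_E k E)"
    using Suc by simp_all
  obtain f where "alpha_labeling (V k) (E k) f"
    using Suc.prems(3) unfolding has_alpha_labeling_def by blast
  moreover have "inj (Pair k)" by (simp add: inj_def)
  ultimately have "simple_graph (Pair k ` V k) ((`) (Pair k) ` E k)"
      "alpha_labeling (Pair k ` V k) ((`) (Pair k) ` E k) (f \<circ> inv (Pair k))"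
    using simple_graph_image alpha_labeling_image Suc.prems(1)[of k] by simp_all
  moreover have "(`) (Pair k) ` E k \<noteq> {}" using Suc.prems(2) by simp
  moreover have "disj_union_V k V \<inter> Pair k ` V k = {}" by (auto simp: disj_union_V_def)
  ultimately show ?case
    unfolding disj_union_V_Suc disj_union_E_Suc
    using IH by (simp add: simple_graph_Un odd_graceful_Un_alpha_labeling)
qed

theorem theorem3:
  fixes V :: "nat \<Rightarrow> 'a set" and E :: "nat \<Rightarrow> 'a set set" and k :: nat
  assumes blocks: "\<forall>i<k. nonseparable (V i) (E i)"
    and nontrivial: "\<forall>i<k. E i \<noteq> {}"
    and alpha: "\<forall>i<k. has_alpha_labeling (V i) (E i)"
  shows "odd_graceful (disj_union_V k V) (disj_union_E k E)"
  using odd_graceful_disj_union[of k V E] blocks nontrivial alpha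
  by (simp add: nonseparable_def)

end
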